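(* Let $\sigma>0$, $k\in\{0,1,2\}$, $l\in\{0,1\}$, and let $f$ be $(\sigma',2)$-Gevrey regular on $[0,1]$ for some $\sigma'>\sigma$. If $u\in G_{\sigma,k,l}$ then $fu\in G_{\sigma,k,l}$ and $\|fu\|_{\sigma,k,l}\le C\|u\|_{\sigma,k,l}$, where $C$ depends only on $\sigma,\sigma',k,l$ and $f$.
   Context: Let $I=(0,1)$. A function $u\in C^\infty(\overline I)$ is $(\sigma,k)$-Gevrey regular ($\sigma,k>0$) if there is $C>0$ with $\sup_{x\in I}|u^{(n)}(x)|\le C\sigma^{-n}(n!)^k$ for all $n\ge0$. For $\sigma>0$, $u\in C^\infty(\overline I)$, $k\in\{0,1,2\}$, $l\in\{0,1\}$, set $|u|^{0}_{\sigma,k,l}=\big(\sum_{n=0}^\infty\frac{\sigma^{2n}}{n!^2(n+1)!^2}n^{k+l}\int_0^1(x/\sigma)^k|\partial_x^nu|^2dx\big)^{1/2}$ (with $0^0:=1$); $\|u\|_{\sigma,0,0}=|u|^0_{\sigma,0,0}$, and for $k+l>0$, $\|u\|_{\sigma,k,l}=|u|^0_{\sigma,k,l}+(\int_0^1(x/\sigma)^k|u|^2dx)^{1/2}$. $G_{\sigma,k,l}=\{u\in C^\infty(\overline I):\|u\|_{\sigma,k,l}<\infty\}$. *)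

theory Defs
  imports "HOL-Analysis.Analysis"
begin

definition dn :: "nat \<Rightarrow> (real \<Rightarrow> real) \<Rightarrow> real \<Rightarrow> real" where
  "dn n u = ((\<lambda>g x. vector_derivative g (at x within {0..1})) ^^ n) u"

definition smooth01 :: "(real \<Rightarrow> real) \<Rightarrow> bool" where
  "smooth01 u \<longleftrightarrow> (\<forall>n. \<forall>x\<in>{0..1::real}.
      (dn n u has_vector_derivative dn (Suc n) u x) (at x within {0..1}))"

definition gevrey_regular :: "real \<Rightarrow> real \<Rightarrow> (real \<Rightarrow> real) \<Rightarrow> bool" where
  "gevrey_regular \<sigma> k u \<longleftrightarrow> smooth01 u \<and>
     (\<exists>C. \<forall>n. \<forall>x\<in>{0<..<1::real}. \<bar>dn n u x\<bar> \<le> C * \<sigma> powr (- real n) * (fact n) powr k)"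

definition gterm :: "real \<Rightarrow> nat \<Rightarrow> nat \<Rightarrow> (real \<Rightarrow> real) \<Rightarrow> nat \<Rightarrow> real" where
  "gterm \<sigma> k l u n = \<sigma> ^ (2*n) / ((fact n)^2 * (fact (n+1))^2) * (real n) ^ (k+l)
      * integral {0..1} (\<lambda>x. (x/\<sigma>)^k * (dn n u x)^2)"

definition gseminorm :: "real \<Rightarrow> nat \<Rightarrow> nat \<Rightarrow> (real \<Rightarrow> real) \<Rightarrow> real" where
  "gseminorm \<sigma> k l u = sqrt (\<Sum>n. gterm \<sigma> k l u n)"

definition gnorm :: "real \<Rightarrow> nat \<Rightarrow> nat \<Rightarrow> (real \<Rightarrow> real) \<Rightarrow> real" where
  "gnorm \<sigma> k l u = (if k + l = 0 then gseminorm \<sigma> k l u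
     else gseminorm \<sigma> k l u + sqrt (integral {0..1} (\<lambda>x. (x/\<sigma>)^k * (u x)^2)))"

definition inG :: "real \<Rightarrow> nat \<Rightarrow> nat \<Rightarrow> (real \<Rightarrow> real) \<Rightarrow> bool" where
  "inG \<sigma> k l u \<longleftrightarrow> smooth01 u \<and> summable (gterm \<sigma> k l u)"

end

theory Submission
  imports Defs "HOL-Real_Asymp.Real_Asymp"
begin

text \<open>By the Leibniz rule the \<open>n\<close>-th derivative of \<open>f u\<close> is a binomial convolution of the
  derivatives of \<open>f\<close> and \<open>u\<close>. In the weight \<open>w\<^sub>n = \<sigma>^(2n) / (n!^2 (n+1)!^2)\<close> of the series,
  the Gevrey bound \<open>|f^(m)| \<le> C \<sigma>'^(-m) m!^2\<close> makes \<open>w\<^sub>n\<close> times the squared coefficient of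
  \<open>u^(j)\<close>, \<open>m = n - j\<close>, at most \<open>b\<^sub>m^2 w\<^sub>j\<close>, where \<open>b\<^sub>m = (C+1) (m+1)^2 (\<sigma>/\<sigma>')^m\<close>; the factor \<open>(m+1)^2\<close>
  absorbs the growth of \<open>n^(k+l)\<close> against \<open>j^(k+l)\<close>. As \<open>\<sigma> < \<sigma>'\<close>, \<open>B = \<Sum> b\<^sub>m\<close> is finite, and
  Cauchy--Schwarz with weights \<open>b\<^sub>m\<close> bounds the \<open>n\<close>-th term of the series of \<open>f u\<close> by \<open>B\<close> times
  the \<open>n\<close>-th Cauchy product term of \<open>(b\<^sub>m)\<close> with the terms of \<open>u\<close>. Summing gives \<open>B^2\<close> times
  the series of \<open>u\<close>, plus the \<open>j = 0\<close> term, which the series weights by \<open>0^(k+l)\<close> and which is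
  controlled by the \<open>L\<^sup>2\<close> part of the norm instead.\<close>

lemma dn_0 [simp]: "dn 0 u = u"
  by (simp add: dn_def)

lemma dn_Suc: "dn (Suc n) u x = vector_derivative (dn n u) (at x within {0..1})"
  by (simp add: dn_def)

lemma smooth01_has_vector_derivative:
  "smooth01 u \<Longrightarrow> x \<in> {0..1} \<Longrightarrow>
     (dn n u has_vector_derivative dn (Suc n) u x) (at x within {0..1})"
  by (simp add: smooth01_def)

lemma smooth01_continuous_on_dn: "smooth01 u \<Longrightarrow> continuous_on {0..1} (dn n u)"
  using smooth01_has_vector_derivative has_vector_derivative_continuous
    continuous_on_eq_continuous_within by blast

lemma sum_binomial_Suc:
  fixes a b :: "nat \<Rightarrow> real"
  shows "(\<Sum>j\<le>n. real (n choose j) * (a (Suc (n - j)) * b j + a (n - j) * b (Suc j)))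
       = (\<Sum>j\<le>Suc n. real (Suc n choose j) * (a (Suc n - j) * b j))"
proof -
  have "(\<Sum>j\<le>Suc n. real (Suc n choose j) * (a (Suc n - j) * b j))
      = (a (Suc n) * b 0 + (\<Sum>j\<le>n. real (n choose Suc j) * (a (n - j) * b (Suc j))))
        + (\<Sum>j\<le>n. real (n choose j) * (a (n - j) * b (Suc j)))"
    by (subst sum.atMost_Suc_shift) (simp add: algebra_simps sum.distrib)
  also have "a (Suc n) * b 0 + (\<Sum>j\<le>n. real (n choose Suc j) * (a (n - j) * b (Suc j)))
      = (\<Sum>j\<le>Suc n. real (n choose j) * (a (Suc n - j) * b j))"
    by (subst sum.atMost_Suc_shift) simp
  also have "\<dots> = (\<Sum>j\<le>n. real (n choose j) * (a (Suc (n - j)) * b j))"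
    unfolding sum.atMost_Suc by (simp add: Suc_diff_le)
  finally show ?thesis
    by (simp add: algebra_simps sum.distrib)
qed

definition leibniz_sum :: "(real \<Rightarrow> real) \<Rightarrow> (real \<Rightarrow> real) \<Rightarrow> nat \<Rightarrow> real \<Rightarrow> real" where
  "leibniz_sum f u n x = (\<Sum>j\<le>n. real (n choose j) * (dn (n - j) f x * dn j u x))"

lemma leibniz_sum_has_vector_derivative:
  assumes "smooth01 f" "smooth01 u" "x \<in> {0..1}"
  shows "(leibniz_sum f u n has_vector_derivative leibniz_sum f u (Suc n) x) (at x within {0..1})"
proof -
  have "((\<lambda>y. \<Sum>j\<le>n. real (n choose j) * (dn (n - j) f y * dn j u y)) has_real_derivative
      (\<Sum>j\<le>n. real (n choose j) * (dn (Suc (n - j)) f x * dn j u x + dn (n - j) f x * dn (Suc j) u x)))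
      (at x within {0..1})"
    using smooth01_has_vector_derivative [OF assms(1,3)] smooth01_has_vector_derivative [OF assms(2,3)]
    by (auto intro!: derivative_eq_intros simp: has_real_derivative_iff_has_vector_derivative algebra_simps)
  then show ?thesis
    unfolding leibniz_sum_def has_real_derivative_iff_has_vector_derivative
    using sum_binomial_Suc [of n "\<lambda>i. dn i f x" "\<lambda>i. dn i u x"] by simp
qed

lemma dn_mult:
  assumes "smooth01 f" "smooth01 u" "x \<in> {0..1}"
  shows "dn n (\<lambda>x. f x * u x) x = leibniz_sum f u n x"
  using assms(3)
proof (induction n arbitrary: x)
  case 0
  then show ?case by (simp add: leibniz_sum_def)
next
  case (Suc n)
  have "(dn n (\<lambda>x. f x * u x) has_vector_derivative leibniz_sum f u (Suc n) x) (at x within {0..1})"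
    using Suc by (intro has_vector_derivative_transform [OF Suc.prems _
          leibniz_sum_has_vector_derivative [OF assms(1,2)]]) auto
  then show ?case
    unfolding dn_Suc using Suc.prems by (intro vector_derivative_within_closed_interval) auto
qed

lemma smooth01_mult:
  assumes "smooth01 f" "smooth01 u"
  shows "smooth01 (\<lambda>x. f x * u x)"
  unfolding smooth01_def
proof (intro allI ballI)
  fix n and x :: real
  assume x: "x \<in> {0..1}"
  have "(dn n (\<lambda>x. f x * u x) has_vector_derivative leibniz_sum f u (Suc n) x) (at x within {0..1})"
    using dn_mult [OF assms] by (intro has_vector_derivative_transform [OF x _
          leibniz_sum_has_vector_derivative [OF assms x]]) auto
  then show "(dn n (\<lambda>x. f x * u x) has_vector_derivative dn (Suc n) (\<lambda>x. f x * u x) x)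
      (at x within {0..1})"
    using dn_mult [OF assms x] by simp
qed

lemma gevrey_regular_dn_bound:
  assumes "gevrey_regular \<sigma>' 2 f" "\<sigma>' > 0"
  obtains C where "C \<ge> 0" "\<And>n x. x \<in> {0..1} \<Longrightarrow> \<bar>dn n f x\<bar> \<le> C / \<sigma>' ^ n * (fact n)\<^sup>2"
proof -
  from assms(1) obtain C where f: "smooth01 f" and
    C: "\<And>n x. x \<in> {0<..<1::real} \<Longrightarrow> \<bar>dn n f x\<bar> \<le> C * \<sigma>' powr (- real n) * (fact n) powr 2"
    unfolding gevrey_regular_def by blast
  have "\<bar>dn n f x\<bar> \<le> \<bar>C\<bar> / \<sigma>' ^ n * (fact n)\<^sup>2" if x: "x \<in> closure {0<..<1}" for n x
  proof (rule continuous_le_on_closure [OF _ x])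
    show "continuous_on (closure {0<..<1}) (\<lambda>y. \<bar>dn n f y\<bar>)"
      using smooth01_continuous_on_dn [OF f] by (auto intro!: continuous_intros)
    fix y :: real
    assume "y \<in> {0<..<1}"
    then have "\<bar>dn n f y\<bar> \<le> C / \<sigma>' ^ n * (fact n)\<^sup>2"
      using C [of y n] assms(2) by (simp add: powr_minus powr_realpow divide_inverse powr_numeral)
    also have "\<dots> \<le> \<bar>C\<bar> / \<sigma>' ^ n * (fact n)\<^sup>2"
      using assms(2) by (intro mult_right_mono divide_right_mono) auto
    finally show "\<bar>dn n f y\<bar> \<le> \<bar>C\<bar> / \<sigma>' ^ n * (fact n)\<^sup>2" .
  qed
  then show ?thesis
    by (intro that [of "\<bar>C\<bar>"]) auto
qed

lemma fact_mult_le_fact_add: "fact a * fact b \<le> (fact (a + b) :: 'a :: linordered_semidom)"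
proof -
  have "fact a * fact b \<le> (fact (a + b) :: nat)"
    by (rule dvd_imp_le [OF fact_fact_dvd_fact]) simp
  then show ?thesis
    by (metis of_nat_fact of_nat_le_iff of_nat_mult)
qed

lemma binomial_fact_sq_le:
  assumes "j \<le> n"
  shows "real (n choose j) * (fact (n - j))\<^sup>2 / (fact n * fact (n + 1))
    \<le> 1 / (fact j * fact (j + 1))"
proof -
  have "fact (n - j) * fact (j + 1) \<le> (fact (n + 1) :: real)"
    using fact_mult_le_fact_add [of "n - j" "j + 1"] assms by simp
  then show ?thesis
    using assms by (simp add: binomial_fact divide_simps power2_eq_square mult_ac)
qed

definition gweight :: "real \<Rightarrow> nat \<Rightarrow> real" where
  "gweight \<sigma> n = \<sigma> ^ (2 * n) / ((fact n)\<^sup>2 * (fact (n + 1))\<^sup>2)"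

lemma gweight_nonneg: "gweight \<sigma> n \<ge> 0"
  by (simp add: gweight_def power_mult)

lemma real_add_le_mult_max: "real (j + m) \<le> (real m + 1) * max 1 (real j)"
  by (cases j) (auto simp: max_def algebra_simps)

lemma gweight_binomial_le:
  fixes \<sigma> \<sigma>' C :: real
  assumes "\<sigma> > 0" "\<sigma>' > 0" "C \<ge> 0" "kl \<le> 4" "j \<le> n"
  shows "gweight \<sigma> n * real n ^ kl * (real (n choose j) * (C / \<sigma>' ^ (n - j) * (fact (n - j))\<^sup>2))\<^sup>2
    \<le> ((C + 1) * (real (n - j) + 1)\<^sup>2 * (\<sigma> / \<sigma>') ^ (n - j))\<^sup>2 * (gweight \<sigma> j * (max 1 (real j)) ^ kl)"
proof -
  define m where "m = n - j"
  have n: "n = j + m"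
    using assms(5) by (simp add: m_def)
  define Q where "Q = (\<sigma> / \<sigma>') ^ (2 * m)"
  define r where "r = real (n choose j) * (fact m)\<^sup>2 / (fact n * fact (n + 1))"
  have "\<sigma> ^ (2 * n) = \<sigma> ^ (2 * j) * \<sigma> ^ (2 * m)"
    by (simp add: n power_add)
  then have "gweight \<sigma> n * real n ^ kl * (real (n choose j) * (C / \<sigma>' ^ m * (fact m)\<^sup>2))\<^sup>2
      = Q * C\<^sup>2 * real n ^ kl * (\<sigma> ^ (2 * j) * r\<^sup>2)"
    using assms(1,2) unfolding gweight_def Q_def r_def
    by (simp add: power_mult_distrib power_divide power_mult field_simps)
      (simp add: algebra_simps power2_eq_square)
  also have "\<dots> \<le> Q * (C + 1)\<^sup>2 * ((real m + 1) ^ 4 * (max 1 (real j)) ^ kl) * gweight \<sigma> j"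
  proof (intro mult_mono)
    have "real n ^ kl \<le> ((real m + 1) * max 1 (real j)) ^ kl"
      unfolding n by (intro power_mono real_add_le_mult_max) auto
    also have "\<dots> \<le> (real m + 1) ^ 4 * (max 1 (real j)) ^ kl"
      unfolding power_mult_distrib using assms(4) by (intro mult_right_mono power_increasing) auto
    finally show "real n ^ kl \<le> (real m + 1) ^ 4 * (max 1 (real j)) ^ kl" .
    have "r \<le> 1 / (fact j * fact (j + 1))"
      unfolding r_def m_def using binomial_fact_sq_le [OF assms(5)] .
    then have "r\<^sup>2 \<le> (1 / (fact j * fact (j + 1)))\<^sup>2"
      by (intro power_mono) (auto simp: r_def)
    then show "\<sigma> ^ (2 * j) * r\<^sup>2 \<le> gweight \<sigma> j"
      using assms(1) by (auto simp: gweight_def power_mult_distrib divide_simps)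
  qed (use assms in \<open>auto simp: Q_def power_mono\<close>)
  also have "\<dots> = ((C + 1) * (real m + 1)\<^sup>2 * (\<sigma> / \<sigma>') ^ m)\<^sup>2 * (gweight \<sigma> j * (max 1 (real j)) ^ kl)"
    unfolding Q_def by (simp add: power_mult_distrib power_mult [symmetric] mult_ac)
  finally show ?thesis
    by (simp add: m_def)
qed

definition gevrey_majorant :: "real \<Rightarrow> real \<Rightarrow> nat \<Rightarrow> real" where
  "gevrey_majorant C q m = (C + 1) * (real m + 1)\<^sup>2 * q ^ m"

lemma gevrey_majorant_pos: "C \<ge> 0 \<Longrightarrow> q > 0 \<Longrightarrow> gevrey_majorant C q m > 0"
  by (simp add: gevrey_majorant_def add_nonneg_pos)

lemma summable_gevrey_majorant:
  assumes "0 < q" "q < 1"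
  shows "summable (gevrey_majorant C q)"
proof -
  define r where "r = sqrt q"
  have r: "0 < r" "r < 1" "q = r * r"
    using assms by (auto simp: r_def real_sqrt_lt_1_iff)
  have "((\<lambda>m. (real m + 1)\<^sup>2 * r ^ m) \<longlongrightarrow> 0) at_top"
    using r(1,2) by real_asymp
  then have "eventually (\<lambda>m. (real m + 1)\<^sup>2 * r ^ m < 1) at_top"
    by (rule order_tendstoD) simp
  then obtain N where N: "\<And>m. m \<ge> N \<Longrightarrow> (real m + 1)\<^sup>2 * r ^ m < 1"
    by (auto simp: eventually_at_top_linorder)
  have "summable (\<lambda>m. (real m + 1)\<^sup>2 * q ^ m)"
  proof (rule summable_comparison_test' [OF summable_geometric [of r]])
    fix m
    assume "m \<ge> N"
    have "(real m + 1)\<^sup>2 * q ^ m = ((real m + 1)\<^sup>2 * r ^ m) * r ^ m"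
      by (simp add: r(3) power_mult_distrib)
    also have "\<dots> \<le> r ^ m"
      using N [OF \<open>m \<ge> N\<close>] r by (intro mult_left_le_one_le) auto
    finally show "norm ((real m + 1)\<^sup>2 * q ^ m) \<le> r ^ m"
      using assms by simp
  qed (use r in auto)
  then show ?thesis
    unfolding gevrey_majorant_def using summable_mult [of _ "C + 1"] by (simp add: mult.assoc)
qed

lemma weighted_Cauchy_Schwarz:
  fixes a b :: "'a \<Rightarrow> real"
  assumes "\<And>j. j \<in> J \<Longrightarrow> b j > 0"
  shows "(\<Sum>j\<in>J. a j)\<^sup>2 \<le> (\<Sum>j\<in>J. b j) * (\<Sum>j\<in>J. (a j)\<^sup>2 / b j)"
proof -
  have b_nonzero: "j \<in> J \<Longrightarrow> b j \<noteq> 0" for j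
    using assms by force
  have "(\<Sum>j\<in>J. a j)\<^sup>2 = (\<Sum>j\<in>J. sqrt (b j) * (a j / sqrt (b j)))\<^sup>2"
    by (intro arg_cong [where f = "\<lambda>x. x\<^sup>2"] sum.cong) (simp_all add: b_nonzero)
  also have "\<dots> \<le> (\<Sum>j\<in>J. (sqrt (b j))\<^sup>2) * (\<Sum>j\<in>J. (a j / sqrt (b j))\<^sup>2)"
    by (rule Cauchy_Schwarz_ineq_sum)
  also have "\<dots> = (\<Sum>j\<in>J. b j) * (\<Sum>j\<in>J. (a j)\<^sup>2 / b j)"
    using assms by (intro arg_cong2 [where f = "(*)"] sum.cong) (auto simp: power_divide less_imp_le)
  finally show ?thesis .
qed

lemma weighted_sum_sq_le:
  fixes a b c W' :: "'a \<Rightarrow> real" and W :: real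
  assumes "W \<ge> 0" "\<And>j. j \<in> J \<Longrightarrow> b j > 0" "\<And>j. j \<in> J \<Longrightarrow> W * (c j)\<^sup>2 \<le> (b j)\<^sup>2 * W' j"
  shows "W * (\<Sum>j\<in>J. c j * a j)\<^sup>2 \<le> (\<Sum>j\<in>J. b j) * (\<Sum>j\<in>J. b j * (W' j * (a j)\<^sup>2))"
proof -
  have "W * (\<Sum>j\<in>J. c j * a j)\<^sup>2 \<le> W * ((\<Sum>j\<in>J. b j) * (\<Sum>j\<in>J. (c j * a j)\<^sup>2 / b j))"
    using assms(1,2) by (intro mult_left_mono weighted_Cauchy_Schwarz) auto
  also have "\<dots> = (\<Sum>j\<in>J. b j) * (\<Sum>j\<in>J. W * (c j)\<^sup>2 * (a j)\<^sup>2 / b j)"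
    by (simp add: sum_distrib_left power_mult_distrib mult_ac)
  also have "\<dots> \<le> (\<Sum>j\<in>J. b j) * (\<Sum>j\<in>J. b j * (W' j * (a j)\<^sup>2))"
  proof (intro mult_left_mono sum_mono)
    fix j
    assume j: "j \<in> J"
    have "W * (c j)\<^sup>2 * (a j)\<^sup>2 \<le> (b j)\<^sup>2 * W' j * (a j)\<^sup>2"
      using assms(3) [OF j] by (rule mult_right_mono) simp
    then show "W * (c j)\<^sup>2 * (a j)\<^sup>2 / b j \<le> b j * (W' j * (a j)\<^sup>2)"
      using assms(2) [OF j] by (simp add: divide_simps power2_eq_square mult_ac)
  qed (use assms(2) in \<open>auto intro: sum_nonneg less_imp_le\<close>)
  finally show ?thesis .
qed

definition sq_integral :: "real \<Rightarrow> nat \<Rightarrow> (real \<Rightarrow> real) \<Rightarrow> real" where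
  "sq_integral \<sigma> k v = integral {0..1} (\<lambda>x. (x / \<sigma>) ^ k * (v x)\<^sup>2)"

lemma gterm_eq: "gterm \<sigma> k l u n = gweight \<sigma> n * real n ^ (k + l) * sq_integral \<sigma> k (dn n u)"
  by (simp add: gterm_def gweight_def sq_integral_def)

lemma has_integral_sq_integral:
  assumes "continuous_on {0..1} v" "\<sigma> > 0"
  shows "((\<lambda>x. (x / \<sigma>) ^ k * (v x)\<^sup>2) has_integral sq_integral \<sigma> k v) {0..1}"
  unfolding sq_integral_def using assms
  by (intro integrable_integral integrable_continuous_interval) (auto intro!: continuous_intros)

lemma sq_integral_nonneg: "\<sigma> > 0 \<Longrightarrow> sq_integral \<sigma> k v \<ge> 0"
  unfolding sq_integral_def
  by (cases "(\<lambda>x. (x / \<sigma>) ^ k * (v x)\<^sup>2) integrable_on {0..1}")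
    (auto intro!: integral_nonneg simp: not_integrable_integral)

lemma gterm_nonneg: "\<sigma> > 0 \<Longrightarrow> gterm \<sigma> k l u n \<ge> 0"
  unfolding gterm_eq by (intro mult_nonneg_nonneg gweight_nonneg sq_integral_nonneg) auto

lemma summable_convolution_le:
  fixes g y b :: "nat \<Rightarrow> real"
  assumes "\<And>n. g n \<ge> 0" "\<And>n. g n \<le> B * (\<Sum>j\<le>n. y j * b (n - j))"
    and "\<And>j. y j \<ge> 0" "\<And>j. b j \<ge> 0" "summable y" "summable b"
  shows "summable g" "suminf g \<le> B * (suminf y * suminf b)"
proof -
  have y: "summable (\<lambda>j. norm (y j))" and b: "summable (\<lambda>j. norm (b j))"
    using assms(3-6) by simp_all
  note conv = summable_Cauchy_product [OF y b] summable_mult [OF summable_Cauchy_product [OF y b], of B]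
  show "summable g"
    by (rule summable_comparison_test' [OF conv(2)]) (use assms(1,2) in auto)
  then have "suminf g \<le> (\<Sum>n. B * (\<Sum>j\<le>n. y j * b (n - j)))"
    by (rule suminf_le [OF assms(2) _ conv(2)])
  also have "\<dots> = B * (suminf y * suminf b)"
    using suminf_mult [OF conv(1)] Cauchy_product [OF y b] by simp
  finally show "suminf g \<le> B * (suminf y * suminf b)" .
qed

lemma dn_mult_abs_le:
  assumes "smooth01 f" "smooth01 u" "x \<in> {0..1}"
    and f_bound: "\<And>n x. x \<in> {0..1} \<Longrightarrow> \<bar>dn n f x\<bar> \<le> C / \<sigma>' ^ n * (fact n)\<^sup>2"
  shows "\<bar>dn n (\<lambda>x. f x * u x) x\<bar>
    \<le> (\<Sum>j\<le>n. real (n choose j) * (C / \<sigma>' ^ (n - j) * (fact (n - j))\<^sup>2) * \<bar>dn j u x\<bar>)"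
proof -
  have "\<bar>dn n (\<lambda>x. f x * u x) x\<bar> \<le> (\<Sum>j\<le>n. real (n choose j) * (\<bar>dn (n - j) f x\<bar> * \<bar>dn j u x\<bar>))"
    unfolding dn_mult [OF assms(1-3)] leibniz_sum_def
    by (rule order_trans [OF sum_abs]) (simp add: abs_mult)
  also have "\<dots> \<le> (\<Sum>j\<le>n. real (n choose j) * (C / \<sigma>' ^ (n - j) * (fact (n - j))\<^sup>2) * \<bar>dn j u x\<bar>)"
  proof (intro sum_mono)
    fix j
    have "real (n choose j) * (\<bar>dn (n - j) f x\<bar> * \<bar>dn j u x\<bar>)
        \<le> real (n choose j) * ((C / \<sigma>' ^ (n - j) * (fact (n - j))\<^sup>2) * \<bar>dn j u x\<bar>)"
      using f_bound [OF assms(3)] by (intro mult_left_mono mult_right_mono) auto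
    then show "real (n choose j) * (\<bar>dn (n - j) f x\<bar> * \<bar>dn j u x\<bar>)
        \<le> real (n choose j) * (C / \<sigma>' ^ (n - j) * (fact (n - j))\<^sup>2) * \<bar>dn j u x\<bar>"
      by (simp only: mult.assoc)
  qed
  finally show ?thesis .
qed

lemma gweight_dn_mult_sq_le:
  fixes \<sigma> \<sigma>' C :: real
  defines "b \<equiv> gevrey_majorant C (\<sigma> / \<sigma>')"
  assumes "0 < \<sigma>" "\<sigma> < \<sigma>'" "kl \<le> 4" "C \<ge> 0" "smooth01 f" "smooth01 u" "x \<in> {0..1}"
    and f_bound: "\<And>n x. x \<in> {0..1} \<Longrightarrow> \<bar>dn n f x\<bar> \<le> C / \<sigma>' ^ n * (fact n)\<^sup>2"
  shows "gweight \<sigma> n * real n ^ kl * (dn n (\<lambda>x. f x * u x) x)\<^sup>2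
    \<le> suminf b * (\<Sum>j\<le>n. b (n - j) * (gweight \<sigma> j * max 1 (real j) ^ kl * (dn j u x)\<^sup>2))"
proof -
  have b_pos: "b m > 0" for m
    unfolding b_def using assms(2,3,5) by (intro gevrey_majorant_pos) auto
  have "summable b"
    unfolding b_def using assms(2,3) by (intro summable_gevrey_majorant) auto
  have "(\<Sum>j\<le>n. b (n - j)) = (\<Sum>j\<le>n. b j)"
    using sum.atLeastAtMost_rev [of b 0 n] by (simp add: atLeast0AtMost)
  also have "\<dots> \<le> suminf b"
    using \<open>summable b\<close> by (rule sum_le_suminf) (use b_pos in \<open>auto intro: less_imp_le\<close>)
  finally have b_sum_le: "(\<Sum>j\<le>n. b (n - j)) \<le> suminf b" .
  define c where "c j = real (n choose j) * (C / \<sigma>' ^ (n - j) * (fact (n - j))\<^sup>2)" for j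
  define W where "W j = gweight \<sigma> j * max 1 (real j) ^ kl" for j
  have "\<bar>dn n (\<lambda>x. f x * u x) x\<bar> \<le> (\<Sum>j\<le>n. c j * \<bar>dn j u x\<bar>)"
    unfolding c_def by (rule dn_mult_abs_le [OF assms(6-8) f_bound])
  then have "(dn n (\<lambda>x. f x * u x) x)\<^sup>2 \<le> (\<Sum>j\<le>n. c j * \<bar>dn j u x\<bar>)\<^sup>2"
    using power_mono [of _ _ 2] by fastforce
  then have "gweight \<sigma> n * real n ^ kl * (dn n (\<lambda>x. f x * u x) x)\<^sup>2
      \<le> gweight \<sigma> n * real n ^ kl * (\<Sum>j\<le>n. c j * \<bar>dn j u x\<bar>)\<^sup>2"
    by (rule mult_left_mono) (simp_all add: gweight_nonneg)
  also have "\<dots> \<le> (\<Sum>j\<le>n. b (n - j)) * (\<Sum>j\<le>n. b (n - j) * (W j * \<bar>dn j u x\<bar>\<^sup>2))"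
  proof (rule weighted_sum_sq_le)
    fix j
    assume "j \<in> {..n}"
    then show "gweight \<sigma> n * real n ^ kl * (c j)\<^sup>2 \<le> (b (n - j))\<^sup>2 * W j"
      unfolding c_def W_def b_def gevrey_majorant_def
      using assms(2-5) by (intro gweight_binomial_le) auto
  qed (use b_pos in \<open>simp_all add: gweight_nonneg\<close>)
  also have "\<dots> \<le> suminf b * (\<Sum>j\<le>n. b (n - j) * (W j * (dn j u x)\<^sup>2))"
    unfolding power2_abs W_def using b_sum_le b_pos
    by (intro mult_right_mono sum_nonneg) (auto intro!: mult_nonneg_nonneg gweight_nonneg simp: less_imp_le)
  finally show ?thesis
    unfolding W_def .
qed

lemma gterm_mult_le:
  fixes \<sigma> \<sigma>' C :: real
  defines "b \<equiv> gevrey_majorant C (\<sigma> / \<sigma>')"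
  assumes "0 < \<sigma>" "\<sigma> < \<sigma>'" "k + l \<le> 4" "C \<ge> 0" "smooth01 f" "smooth01 u"
    and f_bound: "\<And>n x. x \<in> {0..1} \<Longrightarrow> \<bar>dn n f x\<bar> \<le> C / \<sigma>' ^ n * (fact n)\<^sup>2"
  shows "gterm \<sigma> k l (\<lambda>x. f x * u x) n
    \<le> suminf b * (\<Sum>j\<le>n. (gweight \<sigma> j * max 1 (real j) ^ (k + l) * sq_integral \<sigma> k (dn j u)) * b (n - j))"
proof -
  define A where "A = gweight \<sigma> n * real n ^ (k + l)"
  define W where "W j = gweight \<sigma> j * max 1 (real j) ^ (k + l)" for j
  have fu: "smooth01 (\<lambda>x. f x * u x)"
    using assms(6,7) by (rule smooth01_mult)
  have "((\<lambda>x. A * ((x / \<sigma>) ^ k * (dn n (\<lambda>x. f x * u x) x)\<^sup>2))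
      has_integral A * sq_integral \<sigma> k (dn n (\<lambda>x. f x * u x))) {0..1}"
    using smooth01_continuous_on_dn [OF fu] assms(2) by (intro has_integral_mult_right has_integral_sq_integral)
  moreover have "((\<lambda>x. suminf b * (\<Sum>j\<le>n. b (n - j) * (W j * ((x / \<sigma>) ^ k * (dn j u x)\<^sup>2))))
      has_integral suminf b * (\<Sum>j\<le>n. b (n - j) * (W j * sq_integral \<sigma> k (dn j u)))) {0..1}"
    using smooth01_continuous_on_dn [OF assms(7)] assms(2)
    by (intro has_integral_mult_right has_integral_sum finite_atMost has_integral_sq_integral)
  moreover have "A * ((x / \<sigma>) ^ k * (dn n (\<lambda>x. f x * u x) x)\<^sup>2)
      \<le> suminf b * (\<Sum>j\<le>n. b (n - j) * (W j * ((x / \<sigma>) ^ k * (dn j u x)\<^sup>2)))" if "x \<in> {0..1}" for x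
  proof -
    have "A * ((x / \<sigma>) ^ k * (dn n (\<lambda>x. f x * u x) x)\<^sup>2)
        = (x / \<sigma>) ^ k * (A * (dn n (\<lambda>x. f x * u x) x)\<^sup>2)"
      by (simp add: mult_ac)
    also have "\<dots> \<le> (x / \<sigma>) ^ k * (suminf b * (\<Sum>j\<le>n. b (n - j) * (W j * (dn j u x)\<^sup>2)))"
      unfolding A_def W_def b_def using that assms(2-7)
      by (intro mult_left_mono gweight_dn_mult_sq_le [OF _ _ _ _ _ _ _ f_bound]) auto
    also have "\<dots> = suminf b * (\<Sum>j\<le>n. b (n - j) * (W j * ((x / \<sigma>) ^ k * (dn j u x)\<^sup>2)))"
      by (simp add: sum_distrib_left mult_ac)
    finally show ?thesis .
  qed
  ultimately have "A * sq_integral \<sigma> k (dn n (\<lambda>x. f x * u x))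
      \<le> suminf b * (\<Sum>j\<le>n. b (n - j) * (W j * sq_integral \<sigma> k (dn j u)))"
    by (rule has_integral_le)
  then show ?thesis
    unfolding gterm_eq A_def W_def by (simp add: mult_ac)
qed

lemma gseminorm_mult_le:
  fixes \<sigma> \<sigma>' C :: real
  assumes "0 < \<sigma>" "\<sigma> < \<sigma>'" "k + l \<le> 4" "C \<ge> 0" "smooth01 f" "inG \<sigma> k l u"
    and f_bound: "\<And>n x. x \<in> {0..1} \<Longrightarrow> \<bar>dn n f x\<bar> \<le> C / \<sigma>' ^ n * (fact n)\<^sup>2"
  shows "inG \<sigma> k l (\<lambda>x. f x * u x)"
    and "gseminorm \<sigma> k l (\<lambda>x. f x * u x)
      \<le> suminf (gevrey_majorant C (\<sigma> / \<sigma>')) * (gseminorm \<sigma> k l u + sqrt (sq_integral \<sigma> k u))"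
proof -
  define b where "b = gevrey_majorant C (\<sigma> / \<sigma>')"
  define I where "I = sq_integral \<sigma> k u"
  define S where "S = suminf (gterm \<sigma> k l u)"
  define y where "y j = gweight \<sigma> j * max 1 (real j) ^ (k + l) * sq_integral \<sigma> k (dn j u)" for j
  have u: "smooth01 u" "summable (gterm \<sigma> k l u)"
    using assms(6) by (simp_all add: inG_def)
  have fu: "smooth01 (\<lambda>x. f x * u x)"
    using assms(5) u(1) by (rule smooth01_mult)
  have b: "summable b" "\<And>m. b m \<ge> 0"
    using assms(1,2,4) gevrey_majorant_pos [OF assms(4), of "\<sigma> / \<sigma>'"]
    by (auto simp: b_def intro!: summable_gevrey_majorant less_imp_le)
  have y_nonneg: "y j \<ge> 0" for j
    unfolding y_def using assms(1) by (intro mult_nonneg_nonneg gweight_nonneg sq_integral_nonneg) simp_all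
  have B: "suminf b \<ge> 0" "S \<ge> 0" "I \<ge> 0"
    using b u(2) gterm_nonneg [OF assms(1)] sq_integral_nonneg [OF assms(1)]
    by (auto simp: S_def I_def intro: suminf_nonneg)
  have y_le: "y j \<le> gterm \<sigma> k l u j + (if j = 0 then I else 0)" for j
    using B(3) by (cases "j = 0") (simp_all add: y_def I_def gterm_eq gweight_def)
  have shifted: "summable (\<lambda>j. gterm \<sigma> k l u j + (if j = 0 then I else 0))"
      "(\<Sum>j. gterm \<sigma> k l u j + (if j = 0 then I else 0)) = S + I"
    unfolding S_def using u(2) sums_single [of 0 "\<lambda>_. I"]
    by (simp_all add: sums_iff summable_add suminf_add [symmetric])
  have y: "summable y"
    by (rule summable_comparison_test' [OF shifted(1)]) (use y_le y_nonneg in auto)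
  then have y_le_sum: "suminf y \<le> S + I"
    using suminf_le [OF y_le _ shifted(1)] shifted(2) by simp
  have "gterm \<sigma> k l (\<lambda>x. f x * u x) n \<le> suminf b * (\<Sum>j\<le>n. y j * b (n - j))" for n
    unfolding b_def y_def by (rule gterm_mult_le [OF assms(1-5) u(1) f_bound])
  note gfu = summable_convolution_le [OF gterm_nonneg [OF assms(1)] this y_nonneg b(2) y b(1)]
  then show "inG \<sigma> k l (\<lambda>x. f x * u x)"
    using fu by (simp add: inG_def)
  have "gseminorm \<sigma> k l (\<lambda>x. f x * u x) \<le> sqrt ((suminf b)\<^sup>2 * (S + I))"
    unfolding gseminorm_def using gfu(2) y_le_sum B
    by (intro real_sqrt_le_mono order_trans [OF gfu(2)])
      (simp add: power2_eq_square mult_left_mono mult_right_mono mult_ac)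
  also have "\<dots> \<le> suminf b * (sqrt S + sqrt I)"
    using B by (simp add: real_sqrt_mult sqrt_add_le_add_sqrt mult_left_mono)
  finally show "gseminorm \<sigma> k l (\<lambda>x. f x * u x)
      \<le> suminf (gevrey_majorant C (\<sigma> / \<sigma>')) * (gseminorm \<sigma> k l u + sqrt (sq_integral \<sigma> k u))"
    by (simp add: b_def S_def I_def gseminorm_def)
qed

lemma sq_integral_mult_le:
  assumes "\<sigma> > 0" "continuous_on {0..1} f" "continuous_on {0..1} u"
    and f_bound: "\<And>x. x \<in> {0..1} \<Longrightarrow> \<bar>f x\<bar> \<le> C"
  shows "sq_integral \<sigma> k (\<lambda>x. f x * u x) \<le> C\<^sup>2 * sq_integral \<sigma> k u"
proof (rule has_integral_le)
  show "((\<lambda>x. (x / \<sigma>) ^ k * (f x * u x)\<^sup>2) has_integral sq_integral \<sigma> k (\<lambda>x. f x * u x)) {0..1}"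
    using assms(1-3) by (intro has_integral_sq_integral continuous_intros)
  show "((\<lambda>x. C\<^sup>2 * ((x / \<sigma>) ^ k * (u x)\<^sup>2)) has_integral C\<^sup>2 * sq_integral \<sigma> k u) {0..1}"
    using assms(1,3) by (intro has_integral_mult_right has_integral_sq_integral)
  fix x :: real
  assume x: "x \<in> {0..1}"
  have "(f x)\<^sup>2 \<le> C\<^sup>2"
    using f_bound [OF x] by (metis abs_ge_zero power2_abs power_mono)
  then have "(f x)\<^sup>2 * (u x)\<^sup>2 \<le> C\<^sup>2 * (u x)\<^sup>2"
    by (rule mult_right_mono) simp
  then have "(x / \<sigma>) ^ k * ((f x)\<^sup>2 * (u x)\<^sup>2) \<le> (x / \<sigma>) ^ k * (C\<^sup>2 * (u x)\<^sup>2)"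
    using x assms(1) by (intro mult_left_mono) auto
  then show "(x / \<sigma>) ^ k * (f x * u x)\<^sup>2 \<le> C\<^sup>2 * ((x / \<sigma>) ^ k * (u x)\<^sup>2)"
    by (simp add: power_mult_distrib mult_ac)
qed

lemma gnorm_eq_gseminorm: "k + l = 0 \<Longrightarrow> gnorm \<sigma> k l u = gseminorm \<sigma> k l u"
  by (simp add: gnorm_def)

lemma gnorm_eq_add: "k + l \<noteq> 0 \<Longrightarrow> gnorm \<sigma> k l u = gseminorm \<sigma> k l u + sqrt (sq_integral \<sigma> k u)"
  unfolding gnorm_def sq_integral_def by (rule if_not_P)

lemma gnorm_le: "\<sigma> > 0 \<Longrightarrow> gnorm \<sigma> k l u \<le> gseminorm \<sigma> k l u + sqrt (sq_integral \<sigma> k u)"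
  using sq_integral_nonneg [of \<sigma> k u] gnorm_eq_gseminorm [of k l] gnorm_eq_add [of k l]
  by (cases "k + l = 0") auto

lemma gseminorm_le_gnorm: "\<sigma> > 0 \<Longrightarrow> gseminorm \<sigma> k l u \<le> gnorm \<sigma> k l u"
  using sq_integral_nonneg [of \<sigma> k u] gnorm_eq_gseminorm [of k l] gnorm_eq_add [of k l]
  by (cases "k + l = 0") auto

lemma sqrt_sq_integral_le_gnorm:
  assumes "\<sigma> > 0" "summable (gterm \<sigma> k l u)"
  shows "sqrt (sq_integral \<sigma> k u) \<le> gnorm \<sigma> k l u"
proof (cases "k + l = 0")
  case True
  then have "sq_integral \<sigma> k u = gterm \<sigma> k l u 0"
    by (simp add: gterm_eq gweight_def)
  also have "\<dots> \<le> suminf (gterm \<sigma> k l u)"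
    using assms gterm_nonneg [OF assms(1)] by (intro sum_le_suminf [of _ "{0}", simplified]) auto
  finally show ?thesis
    unfolding gnorm_eq_gseminorm [OF True] gseminorm_def by (rule real_sqrt_le_mono)
next
  case False
  have "suminf (gterm \<sigma> k l u) \<ge> 0"
    using assms gterm_nonneg [OF assms(1)] by (intro suminf_nonneg) auto
  then show ?thesis
    unfolding gnorm_eq_add [OF False] gseminorm_def by simp
qed

lemma gnorm_mult_le:
  fixes \<sigma> \<sigma>' C :: real
  assumes "0 < \<sigma>" "\<sigma> < \<sigma>'" "k + l \<le> 4" "C \<ge> 0" "smooth01 f" "inG \<sigma> k l u"
    and f_bound: "\<And>n x. x \<in> {0..1} \<Longrightarrow> \<bar>dn n f x\<bar> \<le> C / \<sigma>' ^ n * (fact n)\<^sup>2"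
  shows "gnorm \<sigma> k l (\<lambda>x. f x * u x) \<le> (2 * suminf (gevrey_majorant C (\<sigma> / \<sigma>')) + C) * gnorm \<sigma> k l u"
proof -
  define B where "B = suminf (gevrey_majorant C (\<sigma> / \<sigma>'))"
  have "B \<ge> 0"
    unfolding B_def using assms(1,2) gevrey_majorant_pos [OF assms(4), of "\<sigma> / \<sigma>'"]
    by (intro suminf_nonneg summable_gevrey_majorant) (auto intro: less_imp_le)
  have u: "smooth01 u" "summable (gterm \<sigma> k l u)"
    using assms(6) by (simp_all add: inG_def)
  have "\<bar>f x\<bar> \<le> C" if "x \<in> {0..1}" for x
    using f_bound [OF that, of 0] by simp
  then have "sq_integral \<sigma> k (\<lambda>x. f x * u x) \<le> C\<^sup>2 * sq_integral \<sigma> k u"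
    using smooth01_continuous_on_dn [OF assms(5), of 0] smooth01_continuous_on_dn [OF u(1), of 0]
    by (intro sq_integral_mult_le [OF assms(1)]) auto
  then have "sqrt (sq_integral \<sigma> k (\<lambda>x. f x * u x)) \<le> C * sqrt (sq_integral \<sigma> k u)"
    using assms(4) by (metis real_sqrt_le_mono real_sqrt_mult real_sqrt_abs abs_of_nonneg)
  then have "gnorm \<sigma> k l (\<lambda>x. f x * u x)
      \<le> B * (gseminorm \<sigma> k l u + sqrt (sq_integral \<sigma> k u)) + C * sqrt (sq_integral \<sigma> k u)"
    using gnorm_le [OF assms(1), of k l "\<lambda>x. f x * u x"] gseminorm_mult_le(2) [OF assms]
    unfolding B_def by linarith
  also have "\<dots> \<le> B * (2 * gnorm \<sigma> k l u) + C * gnorm \<sigma> k l u"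
    using gseminorm_le_gnorm [OF assms(1), of k l u] sqrt_sq_integral_le_gnorm [OF assms(1) u(2)]
      \<open>B \<ge> 0\<close> assms(4)
    by (intro add_mono mult_left_mono) auto
  finally show ?thesis
    unfolding B_def by (simp add: algebra_simps)
qed

theorem mainTheorem4:
  fixes \<sigma> \<sigma>' :: real and k l :: nat and f :: "real \<Rightarrow> real"
  assumes "\<sigma> > 0" "k \<le> 2" "l \<le> 1" "\<sigma>' > \<sigma>"
    and "gevrey_regular \<sigma>' 2 f"
  shows "\<exists>C. \<forall>u. inG \<sigma> k l u \<longrightarrow>
           inG \<sigma> k l (\<lambda>x. f x * u x) \<and> gnorm \<sigma> k l (\<lambda>x. f x * u x) \<le> C * gnorm \<sigma> k l u"
proof -
  have kl: "k + l \<le> 4" and f: "smooth01 f"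
    using assms(2,3,5) by (auto simp: gevrey_regular_def)
  obtain C where C: "C \<ge> 0" "\<And>n x. x \<in> {0..1} \<Longrightarrow> \<bar>dn n f x\<bar> \<le> C / \<sigma>' ^ n * (fact n)\<^sup>2"
    using gevrey_regular_dn_bound [OF assms(5)] assms(1,4) by auto
  have "inG \<sigma> k l (\<lambda>x. f x * u x) \<and>
      gnorm \<sigma> k l (\<lambda>x. f x * u x) \<le> (2 * suminf (gevrey_majorant C (\<sigma> / \<sigma>')) + C) * gnorm \<sigma> k l u"
    if "inG \<sigma> k l u" for u
    using gseminorm_mult_le(1) [OF assms(1,4) kl C(1) f that] gnorm_mult_le [OF assms(1,4) kl C(1) f that] C(2)
    by blast
  then show ?thesis
    by blast
qed

end
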